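(* Let $\mathcal X$ and $\mathcal Y$ be Polish spaces, let $T:\mathcal X\to\mathcal Y$ be a measurable map, and let $N:\mathcal Y\times\mathcal Y\to[0,\infty)$ be a continuous, bounded pseudo-metric on $\mathcal Y$. Define the pulled-back pseudo-metric $\tilde T(N)$ on $\mathcal X$ by $\tilde T(N)(x,x'):=N(T(x),T(x'))$. Then for all Borel probability measures $a,b$ on $\mathcal X$, $$\mathcal W(N)(T_\# a,\,T_\# b)=\mathcal W(\tilde T(N))(a,b).$$
   Context: For a pseudo-metric (cost) $c$ on a Polish space $\mathcal Z$ and Borel probability measures $\mu,\nu$ on $\mathcal Z$, the Kantorovich (Wasserstein) distance is $\mathcal W(c)(\mu,\nu):=\inf_{\pi\in U(\mu,\nu)}\int_{\mathcal Z\times\mathcal Z} c(z,z')\,d\pi(z,z')$, where $U(\mu,\nu)$ is the set of couplings, i.e. probability measures on $\mathcal Z\times\mathcal Z$ with marginals $\mu$ and $\nu$. $T_\# a$ denotes the push-forward measure $a\circ T^{-1}$. *)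

theory Defs
  imports "HOL-Probability.Probability"
begin

definition pseudo_metric :: "('a \<Rightarrow> 'a \<Rightarrow> real) \<Rightarrow> bool" where
  "pseudo_metric c \<longleftrightarrow>
     (\<forall>x y. 0 \<le> c x y) \<and> (\<forall>x. c x x = 0) \<and> (\<forall>x y. c x y = c y x) \<and>
     (\<forall>x y z. c x z \<le> c x y + c y z)"

definition couplings :: "'a::topological_space measure \<Rightarrow> 'a measure \<Rightarrow> ('a \<times> 'a) measure set" where
  "couplings \<mu> \<nu> = {\<pi>. prob_space \<pi> \<and> sets \<pi> = sets (borel :: ('a \<times> 'a) measure) \<and>
       distr \<pi> borel fst = \<mu> \<and> distr \<pi> borel snd = \<nu>}"

definition wasserstein :: "('a::topological_space \<Rightarrow> 'a \<Rightarrow> real) \<Rightarrow> 'a measure \<Rightarrow> 'a measure \<Rightarrow> ennreal" where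
  "wasserstein c \<mu> \<nu> = (INF \<pi>\<in>couplings \<mu> \<nu>. \<integral>\<^sup>+ z. ennreal (c (fst z) (snd z)) \<partial>\<pi>)"

end

theory Submission
  imports Defs
begin

text \<open>Pushing a coupling of a and b forward along T \<times> T gives a coupling of the
  push-forwards with the same cost, so W(N)(T_# a, T_# b) is the smaller side.
  Conversely, cover Y by countably many Borel cells of N-diameter below \<open>\<epsilon>\<close>: assign
  each point to the first centre in a dense sequence within N-distance \<open>\<epsilon>/2\<close>. A coupling \<open>\<gamma>\<close> of the
  push-forwards is lifted to a coupling of a and b by coupling, for each pair of cells,
  the conditionals of a and b on their preimages independently, weighted by \<open>\<gamma>\<close>; the
  lifted cost exceeds the cost of \<open>\<gamma>\<close> by at most \<open>2\<epsilon>\<close>.\<close>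

lemma borel_measurable_fst [measurable]:
  "fst \<in> borel_measurable (borel :: ('a::second_countable_topology \<times> 'b::second_countable_topology) measure)"
  using measurable_fst[of "borel :: 'a measure" "borel :: 'b measure"] by (simp add: borel_prod)

lemma borel_measurable_snd [measurable]:
  "snd \<in> borel_measurable (borel :: ('a::second_countable_topology \<times> 'b::second_countable_topology) measure)"
  using measurable_snd[of "borel :: 'a measure" "borel :: 'b measure"] by (simp add: borel_prod)

lemma prob_algebra_cong: "sets M = sets N \<Longrightarrow> prob_algebra M = prob_algebra N"
  unfolding prob_algebra_def by (metis subprob_algebra_cong)

lemma (in prob_space) distr_pair_snd:
  assumes "sigma_finite_measure N"
  shows "distr (M \<Otimes>\<^sub>M N) N snd = N"
proof (intro measure_eqI)
  fix A assume A: "A \<in> sets (distr (M \<Otimes>\<^sub>M N) N snd)"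
  then have "emeasure (distr (M \<Otimes>\<^sub>M N) N snd) A = emeasure (M \<Otimes>\<^sub>M N) (space M \<times> A)"
    by (auto simp: emeasure_distr space_pair_measure dest: sets.sets_into_space
             intro!: arg_cong2[where f=emeasure])
  with A show "emeasure (distr (M \<Otimes>\<^sub>M N) N snd) A = emeasure N A"
    by (simp add: sigma_finite_measure.emeasure_pair_measure_Times[OF assms] emeasure_space_1)
qed simp

text \<open>On a null cell the conditional is arbitrary; the measure itself is used there so
  that every conditional is a probability measure.\<close>

definition cell_conditional :: "'a measure \<Rightarrow> ('a \<Rightarrow> nat) \<Rightarrow> nat \<Rightarrow> 'a measure" where
  "cell_conditional M f n =
     (if emeasure M (f -` {n} \<inter> space M) = 0 then M else uniform_measure M (f -` {n} \<inter> space M))"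

lemma sets_cell_conditional [simp, measurable_cong]: "sets (cell_conditional M f n) = sets M"
  by (simp add: cell_conditional_def)

lemma cell_conditional_nonnull:
  "emeasure M (f -` {n} \<inter> space M) \<noteq> 0 \<Longrightarrow>
     cell_conditional M f n = uniform_measure M (f -` {n} \<inter> space M)"
  by (simp add: cell_conditional_def)

context
  fixes M :: "'a measure" and f :: "'a \<Rightarrow> nat"
  assumes M: "prob_space M" and f[measurable]: "f \<in> M \<rightarrow>\<^sub>M count_space UNIV"
begin

lemma cell_in_sets [measurable]: "f -` {n} \<inter> space M \<in> sets M"
  by measurable

lemma prob_space_cell_conditional: "prob_space (cell_conditional M f n)"
  using M prob_space.emeasure_le_1[OF M, of "f -` {n} \<inter> space M"]
  by (auto simp: cell_conditional_def top_unique intro!: prob_space_uniform_measure)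

lemma measurable_cell_conditional: "cell_conditional M f \<in> count_space UNIV \<rightarrow>\<^sub>M prob_algebra M"
  by (simp add: space_prob_algebra prob_space_cell_conditional)

lemma AE_cell_conditional:
  assumes "emeasure M (f -` {n} \<inter> space M) \<noteq> 0"
  shows "AE x in cell_conditional M f n. f x = n"
  unfolding cell_conditional_nonnull[OF assms]
  by (rule AE_uniform_measureI[OF cell_in_sets], rule AE_I2) simp

lemma AE_cell_nonnull: "AE x in M. emeasure M (f -` {f x} \<inter> space M) \<noteq> 0"
proof -
  have "(\<Union>n\<in>{n. emeasure M (f -` {n} \<inter> space M) = 0}. f -` {n} \<inter> space M) \<in> null_sets M"
    by (intro null_sets_UN') auto
  then show ?thesis
    by (rule AE_I') auto
qed

lemma emeasure_cell_conditional_mult: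
  assumes "S \<in> sets M"
  shows "emeasure (cell_conditional M f n) S * emeasure M (f -` {n} \<inter> space M)
         = emeasure M (f -` {n} \<inter> space M \<inter> S)"
proof (cases "emeasure M (f -` {n} \<inter> space M) = 0")
  case True
  then show ?thesis
    using emeasure_eq_0[OF cell_in_sets True, of "f -` {n} \<inter> space M \<inter> S"] by auto
next
  case False
  moreover have "emeasure M (f -` {n} \<inter> space M) < \<top>"
    using prob_space.emeasure_le_1[OF M] ennreal_one_less_top by (rule le_less_trans)
  ultimately show ?thesis
    using assms
    by (simp add: cell_conditional_nonnull emeasure_uniform_measure[OF cell_in_sets] ennreal_divide_times)
qed

lemma bind_cell_conditional: "M \<bind> (\<lambda>x. cell_conditional M f (f x)) = M"
proof (rule measure_eqI)
  have space: "space M \<noteq> {}"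
    using prob_space.not_empty[OF M] .
  have kernel: "(\<lambda>x. cell_conditional M f (f x)) \<in> M \<rightarrow>\<^sub>M subprob_algebra M"
    using measurable_compose[OF f measurable_prob_algebraD[OF measurable_cell_conditional]] .
  show "sets (M \<bind> (\<lambda>x. cell_conditional M f (f x))) = sets M"
    using space by simp
  fix S assume "S \<in> sets (M \<bind> (\<lambda>x. cell_conditional M f (f x)))"
  then have S: "S \<in> sets M"
    using space by simp
  let ?C = "\<lambda>n. f -` {n} \<inter> space M"
  have "emeasure (M \<bind> (\<lambda>x. cell_conditional M f (f x))) S
        = (\<integral>\<^sup>+x. emeasure (cell_conditional M f (f x)) S \<partial>M)"
    using space kernel S by (rule emeasure_bind)
  also have "\<dots> = (\<integral>\<^sup>+x. (\<Sum>n. emeasure (cell_conditional M f n) S * indicator (?C n) x) \<partial>M)"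
  proof (rule nn_integral_cong)
    fix x assume "x \<in> space M"
    have "(\<lambda>n. emeasure (cell_conditional M f n) S * indicator (?C n) x)
          = (\<lambda>n. if n = f x then emeasure (cell_conditional M f n) S else 0)"
      using \<open>x \<in> space M\<close> by (auto simp: indicator_def)
    then show "emeasure (cell_conditional M f (f x)) S
               = (\<Sum>n. emeasure (cell_conditional M f n) S * indicator (?C n) x)"
      using sums_unique[OF sums_single] by simp
  qed
  also have "\<dots> = (\<Sum>n. emeasure (cell_conditional M f n) S * emeasure M (?C n))"
    by (subst nn_integral_suminf) (auto simp: nn_integral_cmult_indicator)
  also have "\<dots> = (\<Sum>n. emeasure M (?C n \<inter> S))"
    using S by (simp add: emeasure_cell_conditional_mult)
  also have "\<dots> = emeasure M (\<Union>n. ?C n \<inter> S)"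
    using S by (intro suminf_emeasure) (auto simp: disjoint_family_on_def)
  also have "(\<Union>n. ?C n \<inter> S) = S"
    using sets.sets_into_space[OF S] by auto
  finally show "emeasure (M \<bind> (\<lambda>x. cell_conditional M f (f x))) S = emeasure M S" .
qed

end

lemma pseudo_metric_small_cells:
  fixes N :: "'a::second_countable_topology \<Rightarrow> 'a \<Rightarrow> real"
  assumes N: "pseudo_metric N" and cont: "\<And>y. continuous_on UNIV (N y)" and r: "0 < r"
  obtains idx :: "'a \<Rightarrow> nat"
  where "idx \<in> borel \<rightarrow>\<^sub>M count_space UNIV" and "\<And>y z. idx y = idx z \<Longrightarrow> N y z < r"
proof -
  have N0: "N y y = 0" for y
    using N by (simp add: pseudo_metric_def)
  have Nsym: "N y z = N z y" for y z
    using N by (simp add: pseudo_metric_def)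
  have Ntri: "N x z \<le> N x y + N y z" for x y z
    using N by (simp add: pseudo_metric_def)
  obtain D :: "'a set" where "countable D" and dense: "\<And>U. open U \<Longrightarrow> U \<noteq> {} \<Longrightarrow> \<exists>d\<in>D. d \<in> U"
    by (erule countable_dense_setE)
  define d where "d = from_nat_into D"
  have near: "\<exists>n. N (d n) y < r / 2" for y
  proof -
    have "open {z. N y z < r / 2}"
      using open_Collect_less[OF cont continuous_on_const] .
    moreover have "y \<in> {z. N y z < r / 2}"
      using N0 r by simp
    ultimately obtain z where "z \<in> D" and "N y z < r / 2"
      using dense by blast
    then show ?thesis
      using from_nat_into_to_nat_on[OF \<open>countable D\<close>] Nsym unfolding d_def by metis
  qed
  define idx where "idx y = (LEAST n. N (d n) y < r / 2)" for y
  have idx_near: "N (d (idx y)) y < r / 2" for y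
    unfolding idx_def by (rule LeastI_ex[OF near])
  have [measurable]: "N (d n) \<in> borel_measurable borel" for n
    using cont by (rule borel_measurable_continuous_onI)
  show ?thesis
  proof
    show "idx \<in> borel \<rightarrow>\<^sub>M count_space UNIV"
      unfolding idx_def by measurable
    fix y z assume "idx y = idx z"
    have "N y z \<le> N y (d (idx y)) + N (d (idx y)) z"
      by (rule Ntri)
    then have "N y z \<le> N (d (idx y)) y + N (d (idx z)) z"
      using Nsym \<open>idx y = idx z\<close> by simp
    then show "N y z < r"
      using idx_near[of y] idx_near[of z] by linarith
  qed
qed

lemma nn_integral_pair_measure_le_AE:
  assumes K: "prob_space K" and L: "prob_space L" and c: "c \<in> borel_measurable (K \<Otimes>\<^sub>M L)"
    and P: "AE x in K. P x" and Q: "AE y in L. Q y"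
    and le: "\<And>x y. P x \<Longrightarrow> Q y \<Longrightarrow> c (x, y) \<le> t"
  shows "(\<integral>\<^sup>+z. c z \<partial>(K \<Otimes>\<^sub>M L)) \<le> t"
proof -
  have "(\<integral>\<^sup>+z. c z \<partial>(K \<Otimes>\<^sub>M L)) = (\<integral>\<^sup>+x. \<integral>\<^sup>+y. c (x, y) \<partial>L \<partial>K)"
    using sigma_finite_measure.nn_integral_fst[OF prob_space_imp_sigma_finite[OF L] c] by simp
  also have "\<dots> \<le> (\<integral>\<^sup>+x. \<integral>\<^sup>+y. t \<partial>L \<partial>K)"
  proof (rule nn_integral_mono_AE, rule eventually_mono[OF P])
    fix x assume "P x"
    show "(\<integral>\<^sup>+y. c (x, y) \<partial>L) \<le> (\<integral>\<^sup>+y. t \<partial>L)"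
      by (rule nn_integral_mono_AE, rule eventually_mono[OF Q], rule le[OF \<open>P x\<close>])
  qed
  also have "\<dots> = t"
    by (simp add: prob_space.emeasure_space_1[OF K] prob_space.emeasure_space_1[OF L])
  finally show ?thesis .
qed

lemma distr_bind_pair_measure:
  fixes \<gamma> :: "('a::second_countable_topology \<times> 'b::second_countable_topology) measure"
  assumes [measurable_cong]: "sets \<gamma> = sets borel"
    and K[measurable]: "K \<in> borel \<rightarrow>\<^sub>M prob_algebra M" and L[measurable]: "L \<in> borel \<rightarrow>\<^sub>M prob_algebra N"
  shows "distr (\<gamma> \<bind> (\<lambda>w. K (fst w) \<Otimes>\<^sub>M L (snd w))) M fst = distr \<gamma> borel fst \<bind> K"
    and "distr (\<gamma> \<bind> (\<lambda>w. K (fst w) \<Otimes>\<^sub>M L (snd w))) N snd = distr \<gamma> borel snd \<bind> L"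
proof -
  have space: "space \<gamma> \<noteq> {}"
    using sets_eq_imp_space_eq[OF assms(1)] by simp
  have kernel: "(\<lambda>w. K (fst w) \<Otimes>\<^sub>M L (snd w)) \<in> \<gamma> \<rightarrow>\<^sub>M subprob_algebra (M \<Otimes>\<^sub>M N)"
    by (intro measurable_prob_algebraD) measurable
  have KL: "prob_space (K y)" "sets (K y) = sets M" "prob_space (L y')" "sets (L y') = sets N" for y y'
    using measurable_space[OF K, of y] measurable_space[OF L, of y'] by (auto simp: space_prob_algebra)
  have "distr (K y \<Otimes>\<^sub>M L y') M fst = K y" for y y'
    using prob_space.distr_pair_fst[OF KL(3), of "K y"] by (simp add: KL(2) cong: distr_cong)
  then have "distr (\<gamma> \<bind> (\<lambda>w. K (fst w) \<Otimes>\<^sub>M L (snd w))) M fst = \<gamma> \<bind> (\<lambda>w. K (fst w))"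
    by (simp add: distr_bind[OF kernel space])
  also have "\<dots> = distr \<gamma> borel fst \<bind> K"
    by (rule bind_distr[symmetric, OF _ measurable_prob_algebraD[OF K] space]) measurable
  finally show "distr (\<gamma> \<bind> (\<lambda>w. K (fst w) \<Otimes>\<^sub>M L (snd w))) M fst = distr \<gamma> borel fst \<bind> K" .
  have "distr (K y \<Otimes>\<^sub>M L y') N snd = L y'" for y y'
    using prob_space.distr_pair_snd[OF KL(1) prob_space_imp_sigma_finite[OF KL(3)], of y y']
    by (simp add: KL(4) cong: distr_cong)
  then have "distr (\<gamma> \<bind> (\<lambda>w. K (fst w) \<Otimes>\<^sub>M L (snd w))) N snd = \<gamma> \<bind> (\<lambda>w. L (snd w))"
    by (simp add: distr_bind[OF kernel space])
  also have "\<dots> = distr \<gamma> borel snd \<bind> L"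
    by (rule bind_distr[symmetric, OF _ measurable_prob_algebraD[OF L] space]) measurable
  finally show "distr (\<gamma> \<bind> (\<lambda>w. K (fst w) \<Otimes>\<^sub>M L (snd w))) N snd = distr \<gamma> borel snd \<bind> L" .
qed

lemma couplings_distr_map_prod:
  fixes T :: "'x::second_countable_topology \<Rightarrow> 'y::second_countable_topology"
  assumes T[measurable]: "T \<in> borel_measurable borel" and \<pi>: "\<pi> \<in> couplings a b"
  shows "distr \<pi> borel (map_prod T T) \<in> couplings (distr a borel T) (distr b borel T)"
proof -
  have [measurable_cong]: "sets \<pi> = sets borel"
    using \<pi> by (simp add: couplings_def)
  have [measurable]: "map_prod T T \<in> borel_measurable borel"
    unfolding map_prod_def split_beta' by measurable
  have "distr (distr \<pi> borel (map_prod T T)) borel fst = distr (distr \<pi> borel fst) borel T"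
       "distr (distr \<pi> borel (map_prod T T)) borel snd = distr (distr \<pi> borel snd) borel T"
    by (simp_all add: distr_distr comp_def)
  then show ?thesis
    using \<pi> by (simp add: couplings_def prob_space.prob_space_distr)
qed

context
  fixes a :: "'x::topological_space measure" and T :: "'x \<Rightarrow> 'y::topological_space"
    and idx :: "'y \<Rightarrow> nat"
  assumes a: "prob_space a" and a_sets[measurable_cong]: "sets a = sets borel"
    and T[measurable]: "T \<in> borel_measurable borel"
    and idx[measurable]: "idx \<in> borel \<rightarrow>\<^sub>M count_space UNIV"
begin

lemma measurable_cell_index: "(\<lambda>x. idx (T x)) \<in> a \<rightarrow>\<^sub>M count_space UNIV"
  by measurable

lemma measurable_cell_kernel:
  "(\<lambda>y. cell_conditional a (\<lambda>x. idx (T x)) (idx y)) \<in> borel \<rightarrow>\<^sub>M prob_algebra borel"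
  using measurable_compose[OF idx measurable_cell_conditional[OF a measurable_cell_index]]
  by (simp add: prob_algebra_cong[OF a_sets])

lemma bind_distr_cell_kernel:
  "distr a borel T \<bind> (\<lambda>y. cell_conditional a (\<lambda>x. idx (T x)) (idx y)) = a"
proof -
  have "distr a borel T \<bind> (\<lambda>y. cell_conditional a (\<lambda>x. idx (T x)) (idx y))
        = a \<bind> (\<lambda>x. cell_conditional a (\<lambda>x. idx (T x)) (idx (T x)))"
    by (rule bind_distr[OF _ measurable_prob_algebraD[OF measurable_cell_kernel]])
       (simp_all add: prob_space.not_empty[OF a])
  also have "\<dots> = a"
    by (rule bind_cell_conditional[OF a measurable_cell_index])
  finally show ?thesis .
qed

lemma AE_distr_cell_nonnull:
  "AE y in distr a borel T. emeasure a ((\<lambda>x. idx (T x)) -` {idx y} \<inter> space a) \<noteq> 0"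
  using AE_cell_nonnull[OF a measurable_cell_index] by (subst AE_distr_iff) simp_all

end

definition cell_lift ::
    "'x measure \<Rightarrow> 'x measure \<Rightarrow> ('x \<Rightarrow> 'y) \<Rightarrow> ('y \<Rightarrow> nat) \<Rightarrow> ('y \<times> 'y) measure \<Rightarrow> ('x \<times> 'x) measure"
  where "cell_lift a b T idx \<gamma> = \<gamma> \<bind> (\<lambda>w. cell_conditional a (\<lambda>x. idx (T x)) (idx (fst w))
                                     \<Otimes>\<^sub>M cell_conditional b (\<lambda>x. idx (T x)) (idx (snd w)))"

context
  fixes T :: "'x::second_countable_topology \<Rightarrow> 'y::second_countable_topology"
    and idx :: "'y \<Rightarrow> nat" and a b :: "'x measure" and \<gamma> :: "('y \<times> 'y) measure"
  assumes T[measurable]: "T \<in> borel_measurable borel"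
    and idx[measurable]: "idx \<in> borel \<rightarrow>\<^sub>M count_space UNIV"
    and a: "prob_space a" "sets a = sets borel" and b: "prob_space b" "sets b = sets borel"
    and \<gamma>: "\<gamma> \<in> couplings (distr a borel T) (distr b borel T)"
begin

lemma sets_coupling: "sets \<gamma> = sets borel"
  using \<gamma> by (simp add: couplings_def)

lemma measurable_cell_pair_kernel:
  "(\<lambda>w. cell_conditional a (\<lambda>x. idx (T x)) (idx (fst w)) \<Otimes>\<^sub>M cell_conditional b (\<lambda>x. idx (T x)) (idx (snd w)))
     \<in> borel \<rightarrow>\<^sub>M prob_algebra borel"
proof -
  note measurable_cell_kernel[OF a T idx, measurable] measurable_cell_kernel[OF b T idx, measurable]
  show ?thesis
    unfolding borel_prod[symmetric] by measurable
qed

lemma cell_lift_in_couplings: "cell_lift a b T idx \<gamma> \<in> couplings a b"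
proof -
  have \<gamma>_space: "\<gamma> \<in> space (prob_algebra borel)"
    using \<gamma> by (simp add: couplings_def space_prob_algebra)
  note kernel = measurable_cell_pair_kernel
  have "prob_space (cell_lift a b T idx \<gamma>)" "sets (cell_lift a b T idx \<gamma>) = sets borel"
    unfolding cell_lift_def by (simp_all add: prob_space_bind'[OF \<gamma>_space kernel] sets_bind'[OF \<gamma>_space kernel])
  moreover have "distr (cell_lift a b T idx \<gamma>) borel fst = a" "distr (cell_lift a b T idx \<gamma>) borel snd = b"
    using distr_bind_pair_measure[OF sets_coupling measurable_cell_kernel[OF a T idx] measurable_cell_kernel[OF b T idx]]
      bind_distr_cell_kernel[OF a T idx] bind_distr_cell_kernel[OF b T idx] \<gamma>
    by (simp_all add: cell_lift_def couplings_def)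
  ultimately show ?thesis
    by (simp add: couplings_def)
qed

lemma AE_coupling_cells_nonnull:
  "AE w in \<gamma>. emeasure a ((\<lambda>x. idx (T x)) -` {idx (fst w)} \<inter> space a) \<noteq> 0
             \<and> emeasure b ((\<lambda>x. idx (T x)) -` {idx (snd w)} \<inter> space b) \<noteq> 0"
proof -
  have "distr \<gamma> borel fst = distr a borel T" "distr \<gamma> borel snd = distr b borel T"
    using \<gamma> by (simp_all add: couplings_def)
  note sets_coupling[measurable_cong]
  have "AE w in \<gamma>. emeasure a ((\<lambda>x. idx (T x)) -` {idx (fst w)} \<inter> space a) \<noteq> 0"
    using AE_distr_cell_nonnull[OF a T idx] unfolding \<open>distr \<gamma> borel fst = _\<close>[symmetric]
    by (subst (asm) AE_distr_iff) simp_all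
  moreover have "AE w in \<gamma>. emeasure b ((\<lambda>x. idx (T x)) -` {idx (snd w)} \<inter> space b) \<noteq> 0"
    using AE_distr_cell_nonnull[OF b T idx] unfolding \<open>distr \<gamma> borel snd = _\<close>[symmetric]
    by (subst (asm) AE_distr_iff) simp_all
  ultimately show ?thesis
    by eventually_elim simp
qed

text \<open>The lift only moves mass within cells: almost surely under \<open>\<gamma>\<close>, the conditionals
  attached to w live on the preimages of the cells of fst w and snd w.\<close>

lemma nn_integral_cell_lift_le:
  fixes c :: "'x \<times> 'x \<Rightarrow> ennreal" and h :: "'y \<times> 'y \<Rightarrow> ennreal"
  assumes c[measurable]: "c \<in> borel_measurable borel" and h[measurable]: "h \<in> borel_measurable borel"
    and c_le_h: "\<And>z w. idx (T (fst z)) = idx (fst w) \<Longrightarrow> idx (T (snd z)) = idx (snd w) \<Longrightarrow> c z \<le> h w"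
  shows "(\<integral>\<^sup>+z. c z \<partial>cell_lift a b T idx \<gamma>) \<le> (\<integral>\<^sup>+w. h w \<partial>\<gamma>)"
proof -
  let ?f = "\<lambda>x. idx (T x)"
  note sets_coupling[measurable_cong]
  have cell_index_a: "?f \<in> a \<rightarrow>\<^sub>M count_space UNIV" and cell_index_b: "?f \<in> b \<rightarrow>\<^sub>M count_space UNIV"
    using measurable_cell_index a b T idx by blast+
  have "(\<integral>\<^sup>+z. c z \<partial>cell_lift a b T idx \<gamma>)
        = (\<integral>\<^sup>+w. (\<integral>\<^sup>+z. c z \<partial>(cell_conditional a ?f (idx (fst w)) \<Otimes>\<^sub>M cell_conditional b ?f (idx (snd w)))) \<partial>\<gamma>)"
    unfolding cell_lift_def
    by (rule nn_integral_bind[OF _ measurable_prob_algebraD]) (use measurable_cell_pair_kernel in measurable)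
  also have "\<dots> \<le> (\<integral>\<^sup>+w. h w \<partial>\<gamma>)"
    using AE_coupling_cells_nonnull
  proof (rule nn_integral_mono_AE[OF eventually_mono], safe)
    fix w
    let ?Ka = "cell_conditional a ?f (idx (fst w))" and ?Kb = "cell_conditional b ?f (idx (snd w))"
    assume "emeasure a (?f -` {idx (fst w)} \<inter> space a) \<noteq> 0" "emeasure b (?f -` {idx (snd w)} \<inter> space b) \<noteq> 0"
    then have AE_a: "AE x in ?Ka. ?f x = idx (fst w)" and AE_b: "AE x in ?Kb. ?f x = idx (snd w)"
      by (simp_all add: AE_cell_conditional[OF a(1) cell_index_a] AE_cell_conditional[OF b(1) cell_index_b])
    have "sets (?Ka \<Otimes>\<^sub>M ?Kb) = sets (borel \<Otimes>\<^sub>M borel)"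
      by (rule sets_pair_measure_cong) (simp_all add: a(2) b(2))
    then have "c \<in> borel_measurable (?Ka \<Otimes>\<^sub>M ?Kb)"
      using c unfolding borel_prod by (simp cong: measurable_cong_sets)
    from nn_integral_pair_measure_le_AE[OF prob_space_cell_conditional[OF a(1) cell_index_a]
        prob_space_cell_conditional[OF b(1) cell_index_b] this AE_a AE_b]
    show "(\<integral>\<^sup>+z. c z \<partial>(?Ka \<Otimes>\<^sub>M ?Kb)) \<le> h w"
      using c_le_h by simp
  qed
  finally show ?thesis .
qed

end

lemma borel_measurable_continuous_cost:
  fixes N :: "'a::second_countable_topology \<Rightarrow> 'a \<Rightarrow> real"
  assumes "continuous_on UNIV (\<lambda>(y, y'). N y y')"
  shows "(\<lambda>w. N (fst w) (snd w)) \<in> borel_measurable borel"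
  using borel_measurable_continuous_onI[OF assms] by (simp add: case_prod_beta')

lemma couplings_lift_approx:
  fixes T :: "'x::second_countable_topology \<Rightarrow> 'y::second_countable_topology"
    and N :: "'y \<Rightarrow> 'y \<Rightarrow> real" and e :: real
  assumes T: "T \<in> borel_measurable borel" and N: "pseudo_metric N"
    and N_cont: "continuous_on UNIV (\<lambda>(y, y'). N y y')"
    and a: "prob_space a" "sets a = sets borel" and b: "prob_space b" "sets b = sets borel"
    and \<gamma>: "\<gamma> \<in> couplings (distr a borel T) (distr b borel T)" and e: "0 < e"
  shows "\<exists>\<pi>\<in>couplings a b. (\<integral>\<^sup>+z. N (T (fst z)) (T (snd z)) \<partial>\<pi>)
           \<le> (\<integral>\<^sup>+w. N (fst w) (snd w) \<partial>\<gamma>) + ennreal e"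
proof -
  have N_nonneg: "0 \<le> N y z" and Nsym: "N y z = N z y" for y z
    using N by (simp_all add: pseudo_metric_def)
  have Ntri: "N x y \<le> N x z + N z y" for x y z
    using N unfolding pseudo_metric_def by blast
  have "continuous_on UNIV (N y)" for y
    using continuous_on_compose2[OF N_cont continuous_on_Pair[OF continuous_on_const continuous_on_id]]
    by simp
  then obtain idx :: "'y \<Rightarrow> nat" where idx: "idx \<in> borel \<rightarrow>\<^sub>M count_space UNIV"
    and small: "\<And>y z. idx y = idx z \<Longrightarrow> N y z < e / 2"
    using pseudo_metric_small_cells[OF N] e by (metis half_gt_zero)
  note N_meas[measurable] = borel_measurable_continuous_cost[OF N_cont]
  have "(\<integral>\<^sup>+z. N (T (fst z)) (T (snd z)) \<partial>cell_lift a b T idx \<gamma>)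
          \<le> (\<integral>\<^sup>+w. ennreal (N (fst w) (snd w) + e) \<partial>\<gamma>)"
  proof (rule nn_integral_cell_lift_le[OF T idx a b \<gamma>])
    have "(\<lambda>z. (T (fst z), T (snd z))) \<in> borel \<rightarrow>\<^sub>M borel"
      using T by measurable
    from measurable_compose[OF this N_meas]
    have [measurable]: "(\<lambda>z. N (T (fst z)) (T (snd z))) \<in> borel_measurable borel"
      by simp
    show "(\<lambda>z. ennreal (N (T (fst z)) (T (snd z)))) \<in> borel_measurable borel"
      by measurable
    show "(\<lambda>w. ennreal (N (fst w) (snd w) + e)) \<in> borel_measurable borel"
      by measurable
    fix z w :: "_ \<times> _"
    assume "idx (T (fst z)) = idx (fst w)" "idx (T (snd z)) = idx (snd w)"
    then have "N (T (fst z)) (fst w) < e / 2" "N (snd w) (T (snd z)) < e / 2"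
      using small Nsym by metis+
    moreover have "N (T (fst z)) (T (snd z)) \<le> N (T (fst z)) (fst w) + N (fst w) (snd w) + N (snd w) (T (snd z))"
      using Ntri[of "T (fst z)" "T (snd z)" "fst w"] Ntri[of "fst w" "T (snd z)" "snd w"] by linarith
    ultimately show "ennreal (N (T (fst z)) (T (snd z))) \<le> ennreal (N (fst w) (snd w) + e)"
      by (intro ennreal_leI) linarith
  qed
  moreover have "(\<integral>\<^sup>+w. ennreal (N (fst w) (snd w) + e) \<partial>\<gamma>) = (\<integral>\<^sup>+w. N (fst w) (snd w) \<partial>\<gamma>) + ennreal e"
  proof -
    have [measurable_cong]: "sets \<gamma> = sets borel" and "prob_space \<gamma>"
      using \<gamma> by (simp_all add: couplings_def)
    then show ?thesis
      using e N_nonneg by (simp add: ennreal_plus nn_integral_add prob_space.emeasure_space_1)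
  qed
  ultimately show ?thesis
    using cell_lift_in_couplings[OF T idx a b \<gamma>] by auto
qed

lemma wasserstein_le_coupling:
  "\<pi> \<in> couplings \<mu> \<nu> \<Longrightarrow> wasserstein c \<mu> \<nu> \<le> (\<integral>\<^sup>+z. c (fst z) (snd z) \<partial>\<pi>)"
  unfolding wasserstein_def by (rule INF_lower)

lemma wasserstein_distr_le:
  fixes T :: "'x::second_countable_topology \<Rightarrow> 'y::second_countable_topology"
  assumes T: "T \<in> borel_measurable borel" and N_cont: "continuous_on UNIV (\<lambda>(y, y'). N y y')"
  shows "wasserstein N (distr a borel T) (distr b borel T) \<le> wasserstein (\<lambda>x x'. N (T x) (T x')) a b"
  unfolding wasserstein_def [of "\<lambda>x x'. N (T x) (T x')"]
proof (rule INF_greatest)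
  fix \<pi> assume \<pi>: "\<pi> \<in> couplings a b"
  have [measurable_cong]: "sets \<pi> = sets borel"
    using \<pi> by (simp add: couplings_def)
  note T[measurable] borel_measurable_continuous_cost[OF N_cont, measurable]
  have "wasserstein N (distr a borel T) (distr b borel T)
        \<le> (\<integral>\<^sup>+z. N (fst z) (snd z) \<partial>distr \<pi> borel (map_prod T T))"
    by (rule wasserstein_le_coupling[OF couplings_distr_map_prod[OF T \<pi>]])
  also have "\<dots> = (\<integral>\<^sup>+z. N (T (fst z)) (T (snd z)) \<partial>\<pi>)"
    by (subst nn_integral_distr) (simp_all add: map_prod_def split_beta')
  finally show "wasserstein N (distr a borel T) (distr b borel T)
                \<le> (\<integral>\<^sup>+z. ennreal (N (T (fst z)) (T (snd z))) \<partial>\<pi>)" .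
qed

lemma wasserstein_le_distr:
  fixes T :: "'x::second_countable_topology \<Rightarrow> 'y::second_countable_topology"
  assumes T: "T \<in> borel_measurable borel" and N: "pseudo_metric N"
    and N_cont: "continuous_on UNIV (\<lambda>(y, y'). N y y')"
    and a: "prob_space a" "sets a = sets borel" and b: "prob_space b" "sets b = sets borel"
  shows "wasserstein (\<lambda>x x'. N (T x) (T x')) a b \<le> wasserstein N (distr a borel T) (distr b borel T)"
  unfolding wasserstein_def [of N]
proof (rule INF_greatest, rule ennreal_le_epsilon)
  fix \<gamma> and e :: real
  assume "\<gamma> \<in> couplings (distr a borel T) (distr b borel T)" and "0 < e"
  then obtain \<pi> where "\<pi> \<in> couplings a b"
    and "(\<integral>\<^sup>+z. N (T (fst z)) (T (snd z)) \<partial>\<pi>) \<le> (\<integral>\<^sup>+w. N (fst w) (snd w) \<partial>\<gamma>) + e"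
    using couplings_lift_approx[OF T N N_cont a b] by blast
  then show "wasserstein (\<lambda>x x'. N (T x) (T x')) a b \<le> (\<integral>\<^sup>+w. N (fst w) (snd w) \<partial>\<gamma>) + e"
    using wasserstein_le_coupling[of \<pi> a b "\<lambda>x x'. N (T x) (T x')"] by simp
qed

theorem mainTheorem1:
  fixes T :: "'x::polish_space \<Rightarrow> 'y::polish_space"
    and N :: "'y \<Rightarrow> 'y \<Rightarrow> real"
    and a b :: "'x measure"
  assumes T_meas: "T \<in> measurable borel borel"
    and N_pm: "pseudo_metric N"
    and N_cont: "continuous_on UNIV (\<lambda>(y, y'). N y y')"
    and N_bdd: "\<exists>B. \<forall>y y'. N y y' \<le> B"
    and a_prob: "prob_space a" and a_sets: "sets a = sets borel"
    and b_prob: "prob_space b" and b_sets: "sets b = sets borel"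
  shows "wasserstein N (distr a borel T) (distr b borel T)
           = wasserstein (\<lambda>x x'. N (T x) (T x')) a b"
proof (rule antisym)
  show "wasserstein N (distr a borel T) (distr b borel T) \<le> wasserstein (\<lambda>x x'. N (T x) (T x')) a b"
    using T_meas N_cont by (rule wasserstein_distr_le)
  show "wasserstein (\<lambda>x x'. N (T x) (T x')) a b \<le> wasserstein N (distr a borel T) (distr b borel T)"
    using T_meas N_pm N_cont a_prob a_sets b_prob b_sets by (rule wasserstein_le_distr)
qed

end
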